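(* The Cesàro operator $\mathcal C: VH(\mathbb D)\to VH(\mathbb D)$ is not compact, i.e. there is no $0$-neighbourhood $U$ in $VH(\mathbb D)$ such that $\mathcal C(U)$ is relatively compact in $VH(\mathbb D)$.
   Context: $\mathbb D$ is the open unit disc. Define $v(z)=1$ if $|z|\le 1-1/e$ and $v(z)=(-\log(1-|z|))^{-1}$ if $1-1/e\le|z|<1$, $v_k=v^k$, $H^\infty_{v_k}=\{f \text{ analytic on }\mathbb D:\sup_{z\in\mathbb D}v_k(z)|f(z)|<\infty\}$ normed by this sup, and $VH(\mathbb D)=\bigcup_kH^\infty_{v_k}$ with the finest locally convex topology making all inclusions continuous. The Cesàro operator is $\mathcal C f(z)=\frac1z\int_0^z\frac{f(\zeta)}{1-\zeta}\,d\zeta$ for $z\neq0$, $\mathcal Cf(0)=f(0)$. *)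

theory Defs
  imports "HOL-Complex_Analysis.Complex_Analysis"
begin

definition vw :: "complex \<Rightarrow> real" where
  "vw z = (if norm z \<le> 1 - 1 / exp 1 then 1 else inverse (- ln (1 - norm z)))"

text \<open>Functions on the disc are represented as functions complex => complex that
  vanish outside the open unit disc (so that equality is equality on the disc).\<close>
definition Hv :: "nat \<Rightarrow> (complex \<Rightarrow> complex) set" where
  "Hv k = {f. f holomorphic_on ball 0 1 \<and> (\<forall>z. z \<notin> ball 0 1 \<longrightarrow> f z = 0)
            \<and> bdd_above ((\<lambda>z. vw z ^ k * norm (f z)) ` ball 0 1)}"

definition Hv_norm :: "nat \<Rightarrow> (complex \<Rightarrow> complex) \<Rightarrow> real" where
  "Hv_norm k f = (SUP z\<in>ball 0 1. vw z ^ k * norm (f z))"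

definition VH :: "(complex \<Rightarrow> complex) set" where
  "VH = (\<Union>k. Hv k)"

text \<open>Basic 0-neighbourhoods of the locally convex inductive limit: absolutely convex
  subsets of VH whose trace on every step H_{v_k} contains a ball.\<close>
definition VH_basic_nbhd :: "(complex \<Rightarrow> complex) set \<Rightarrow> bool" where
  "VH_basic_nbhd W \<longleftrightarrow> W \<subseteq> VH \<and>
     (\<forall>x\<in>W. \<forall>y\<in>W. \<forall>a b :: complex. norm a + norm b \<le> 1 \<longrightarrow> (\<lambda>z. a * x z + b * y z) \<in> W) \<and>
     (\<forall>k. \<exists>\<epsilon>>0. {g \<in> Hv k. Hv_norm k g < \<epsilon>} \<subseteq> W)"

definition VH_open :: "(complex \<Rightarrow> complex) set \<Rightarrow> bool" where
  "VH_open S \<longleftrightarrow> S \<subseteq> VH \<and> (\<forall>f\<in>S. \<exists>W. VH_basic_nbhd W \<and> (\<lambda>g. (\<lambda>z. f z + g z)) ` W \<subseteq> S)"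

lemma VH_basic_nbhd_Int:
  assumes "VH_basic_nbhd W1" "VH_basic_nbhd W2"
  shows "VH_basic_nbhd (W1 \<inter> W2)"
proof -
  have "\<exists>\<epsilon>>0. {g \<in> Hv k. Hv_norm k g < \<epsilon>} \<subseteq> W1 \<inter> W2" for k
  proof -
    obtain e1 where "e1 > 0" "{g \<in> Hv k. Hv_norm k g < e1} \<subseteq> W1"
      using assms(1) unfolding VH_basic_nbhd_def by blast
    moreover obtain e2 where "e2 > 0" "{g \<in> Hv k. Hv_norm k g < e2} \<subseteq> W2"
      using assms(2) unfolding VH_basic_nbhd_def by blast
    ultimately show ?thesis
      by (intro exI[of _ "min e1 e2"]) auto
  qed
  thus ?thesis using assms unfolding VH_basic_nbhd_def by blast
qed

lemma istopology_VH_open: "istopology VH_open"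
  unfolding istopology_def
proof safe
  fix S T assume S: "VH_open S" and T: "VH_open T"
  show "VH_open (S \<inter> T)"
    unfolding VH_open_def
  proof safe
    fix x assume "x \<in> S" then show "x \<in> VH" using S unfolding VH_open_def by blast
  next
    fix f assume f: "f \<in> S" "f \<in> T"
    obtain W1 where "VH_basic_nbhd W1" "(\<lambda>g z. f z + g z) ` W1 \<subseteq> S"
      using S f unfolding VH_open_def by blast
    moreover obtain W2 where "VH_basic_nbhd W2" "(\<lambda>g z. f z + g z) ` W2 \<subseteq> T"
      using T f unfolding VH_open_def by blast
    ultimately show "\<exists>W. VH_basic_nbhd W \<and> (\<lambda>g z. f z + g z) ` W \<subseteq> S \<inter> T"
      by (intro exI[of _ "W1 \<inter> W2"]) (auto intro: VH_basic_nbhd_Int)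
  qed
next
  fix K assume K: "\<forall>S\<in>K. VH_open S"
  show "VH_open (\<Union>K)"
    unfolding VH_open_def
  proof safe
    fix x S assume "x \<in> S" "S \<in> K" then show "x \<in> VH" using K unfolding VH_open_def by blast
  next
    fix f S assume "f \<in> S" "S \<in> K"
    then obtain W where "VH_basic_nbhd W" "(\<lambda>g z. f z + g z) ` W \<subseteq> S"
      using K unfolding VH_open_def by blast
    with \<open>S \<in> K\<close> show "\<exists>W. VH_basic_nbhd W \<and> (\<lambda>g z. f z + g z) ` W \<subseteq> \<Union>K" by blast
  qed
qed

definition VH_top :: "(complex \<Rightarrow> complex) topology" where
  "VH_top = topology VH_open"

lemma openin_VH_top: "openin VH_top S \<longleftrightarrow> VH_open S"
  unfolding VH_top_def using istopology_VH_open by (simp add: topology_inverse')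

definition cesaro :: "(complex \<Rightarrow> complex) \<Rightarrow> (complex \<Rightarrow> complex)" where
  "cesaro f z = (if z \<notin> ball 0 1 then 0 else if z = 0 then f 0
                 else contour_integral (linepath 0 z) (\<lambda>\<zeta>. f \<zeta> / (1 - \<zeta>)) / z)"

definition VH_zero_nbhd :: "(complex \<Rightarrow> complex) set \<Rightarrow> bool" where
  "VH_zero_nbhd U \<longleftrightarrow> (\<exists>S. openin VH_top S \<and> (\<lambda>z. 0) \<in> S \<and> S \<subseteq> U)"

end

theory Submission
  imports Defs
begin

text \<open>If \<open>C(U)\<close> were relatively compact for a 0-neighbourhood \<open>U\<close>, every continuous seminorm
  on \<open>VH\<close> would be bounded on \<open>C(U)\<close>. With \<open>L(z) = -log(1 - z)\<close>, the neighbourhood \<open>U\<close>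
  contains, for every \<open>N\<close>, a small multiple \<open>c\<^sub>N g\<^sub>N\<close> of
  \<open>g\<^sub>N = (1 - z) L\<^sup>N\<^sup>+\<^sup>1 + (N + 1) z L\<^sup>N \<in> H\<^sub>v\<^sub>N\<close>, and \<open>C(g\<^sub>N) = L\<^sup>N\<^sup>+\<^sup>1\<close>.
  Let \<open>r\<^sub>m\<close> be the real point with \<open>L(r\<^sub>m) = T\<^sub>m = 1 / v(r\<^sub>m)\<close>. The seminorm
  \<open>p(f) = sup\<^sub>m |f(r\<^sub>m)| / T\<^sub>m\<^sup>m\<close> is dominated by a multiple of the norm on each step
  \<open>H\<^sub>v\<^sub>k\<close> (only finitely many \<open>m < k\<close> need the constant), hence continuous on the inductive
  limit; but \<open>p(C(c\<^sub>N g\<^sub>N)) \<ge> c\<^sub>N T\<^sub>N\<close>, which is unbounded once \<open>T\<^sub>N \<ge> N / c\<^sub>N\<close>.\<close>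

lemma one_less_minus_ln_one_minus:
  fixes r :: real
  assumes "1 - 1 / exp 1 < r" "r < 1"
  shows "1 < - ln (1 - r)"
proof -
  have "1 - r < exp (-1)" using assms(1) by (simp add: exp_minus field_simps)
  hence "ln (1 - r) < -1"
    using assms(2) by (metis ln_exp ln_less_cancel_iff diff_gt_0_iff_gt exp_gt_zero)
  thus ?thesis by simp
qed

lemma
  assumes "z \<in> ball (0::complex) 1"
  shows vw_pos: "0 < vw z" and vw_le_one: "vw z \<le> 1"
proof -
  have "1 < - ln (1 - norm z)" if "\<not> norm z \<le> 1 - 1 / exp 1"
    using that assms by (intro one_less_minus_ln_one_minus) auto
  thus "0 < vw z" "vw z \<le> 1"
    unfolding vw_def by (auto simp: inverse_le_1_iff simp del: inverse_minus_eq)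
qed

lemma one_minus_notin_nonpos_Reals: "z \<in> ball (0::complex) 1 \<Longrightarrow> 1 - z \<notin> \<real>\<^sub>\<le>\<^sub>0"
  using complex_Re_le_cmod[of z] by (auto simp: complex_nonpos_Reals_iff)

lemma norm_Ln_le: "w \<noteq> 0 \<Longrightarrow> norm (Ln w) \<le> \<bar>ln (norm w)\<bar> + pi"
  using cmod_le[of "Ln w"] mpi_less_Im_Ln[of w] Im_Ln_le_pi[of w] by (simp add: Re_Ln)

definition neglog :: "complex \<Rightarrow> complex" where
  "neglog z = - Ln (1 - z)"

lemma holomorphic_on_neglog: "neglog holomorphic_on ball 0 1"
  unfolding neglog_def[abs_def]
  by (intro holomorphic_intros holomorphic_on_Ln' one_minus_notin_nonpos_Reals) auto

lemma has_field_derivative_neglog: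
  assumes "z \<in> ball 0 1"
  shows "(neglog has_field_derivative inverse (1 - z)) (at z)"
proof -
  have "((\<lambda>z. - Ln (1 - z)) has_field_derivative - (inverse (1 - z) * (0 - 1))) (at z)"
    by (intro derivative_intros has_field_derivative_Ln[THEN DERIV_chain2]
          one_minus_notin_nonpos_Reals[OF assms])
  thus ?thesis unfolding neglog_def[abs_def] by simp
qed

definition neglog_inv :: "real \<Rightarrow> complex" where
  "neglog_inv t = complex_of_real (1 - exp (- t))"

lemma neglog_neglog_inv [simp]: "neglog (neglog_inv t) = complex_of_real t"
  by (simp add: neglog_def neglog_inv_def Ln_of_real)

lemma norm_neglog_inv: "0 \<le> t \<Longrightarrow> norm (neglog_inv t) = 1 - exp (- t)"
  unfolding neglog_inv_def norm_of_real by simp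

lemma neglog_inv_in_ball: "0 < t \<Longrightarrow> neglog_inv t \<in> ball 0 1"
  by (simp add: norm_neglog_inv)

lemma vw_neglog_inv:
  assumes "1 \<le> t"
  shows "vw (neglog_inv t) = inverse t"
proof -
  have "t \<le> 1" if "1 - exp (- t) \<le> 1 - 1 / exp 1"
    using that by (simp add: exp_minus field_simps)
  thus ?thesis using assms by (auto simp: vw_def norm_neglog_inv neglog_inv_def [symmetric])
qed

text \<open>Since \<open>1 - |z| \<le> |1 - z| \<le> 2\<close>, the modulus of \<open>neglog z\<close> exceeds
  \<open>-ln (1 - |z|)\<close>, which is \<open>1 / vw z\<close> near the boundary, by at most \<open>1 + pi\<close>.\<close>
lemma vw_mult_norm_neglog_le:
  assumes "z \<in> ball 0 1"
  shows "vw z * norm (neglog z) \<le> 6"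
proof -
  have n: "norm z < 1" using assms by simp
  define L where "L = - ln (1 - norm z)"
  have L0: "L \<ge> 0" unfolding L_def using n by (simp add: ln_le_zero_iff)
  have nz: "1 - z \<noteq> 0" using n by auto
  have "ln (1 - norm z) \<le> ln (norm (1 - z))"
    using norm_triangle_ineq2[of 1 z] n by (intro ln_mono) auto
  moreover have "ln (norm (1 - z)) \<le> 1"
    using ln_le_minus_one[of "norm (1 - z)"] norm_triangle_ineq4[of 1 z] n nz by simp
  ultimately have "\<bar>ln (norm (1 - z))\<bar> \<le> L + 1" using L0 unfolding L_def by linarith
  hence L5: "norm (neglog z) \<le> L + 5"
    using norm_Ln_le[OF nz] pi_less_4 unfolding neglog_def norm_minus_cancel by linarith
  show ?thesis
  proof (cases "norm z \<le> 1 - 1 / exp 1")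
    case True
    hence "L \<le> 1"
      unfolding L_def using n by (simp add: exp_minus field_simps ln_ge_iff)
    thus ?thesis using L5 True by (simp add: vw_def)
  next
    case False
    hence L1: "1 < L" using n unfolding L_def by (intro one_less_minus_ln_one_minus) auto
    hence "vw z * norm (neglog z) \<le> inverse L * (L + 5)"
      using False L5 by (simp add: vw_def L_def mult_left_mono)
    also have "\<dots> \<le> 6" using L1 by (simp add: field_simps)
    finally show ?thesis .
  qed
qed

lemma mult_abs_ln_le:
  fixes x :: real
  assumes "0 < x" "x \<le> 2"
  shows "x * \<bar>ln x\<bar> \<le> 2"
proof (cases "x \<le> 1")
  case True
  have "ln (1 / x) \<le> 1 / x - 1" using ln_le_minus_one[of "1 / x"] assms(1) by simp
  hence "x * - ln x \<le> 1" using assms(1) by (simp add: ln_div field_simps)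
  thus ?thesis using True assms(1) by simp
next
  case False
  have "ln x \<le> 1" using ln_le_minus_one[of x] assms by simp
  thus ?thesis using False assms(2) mult_mono[of x 2 "ln x" 1] by simp
qed

lemma norm_one_minus_mult_norm_neglog_le:
  assumes "z \<in> ball 0 1"
  shows "norm (1 - z) * norm (neglog z) \<le> 10"
proof -
  define x where "x = norm (1 - z)"
  have x0: "0 < x" using assms by (auto simp: x_def)
  have x2: "x \<le> 2" using norm_triangle_ineq4[of 1 z] assms by (simp add: x_def)
  have "x * norm (neglog z) \<le> x * (\<bar>ln x\<bar> + pi)"
    using norm_Ln_le[of "1 - z"] x0 unfolding neglog_def norm_minus_cancel x_def by simp
  moreover have "x * pi \<le> 2 * 4" using x2 x0 pi_less_4 by (intro mult_mono) auto
  ultimately show ?thesis using mult_abs_ln_le[OF x0 x2] by (simp add: x_def algebra_simps)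
qed

definition on_disc :: "(complex \<Rightarrow> complex) \<Rightarrow> complex \<Rightarrow> complex" where
  "on_disc f z = (if z \<in> ball 0 1 then f z else 0)"

lemma
  assumes "f holomorphic_on ball 0 1" and "\<And>z. z \<in> ball 0 1 \<Longrightarrow> vw z ^ k * norm (f z) \<le> B"
  shows on_disc_in_Hv: "on_disc f \<in> Hv k" and Hv_norm_on_disc_le: "Hv_norm k (on_disc f) \<le> B"
proof -
  have "on_disc f holomorphic_on ball 0 1"
    using assms(1) by (rule holomorphic_transform) (simp add: on_disc_def)
  moreover have "bdd_above ((\<lambda>z. vw z ^ k * norm (on_disc f z)) ` ball 0 1)"
    using assms(2) by (intro bdd_aboveI2) (auto simp: on_disc_def)
  ultimately show "on_disc f \<in> Hv k" by (simp add: Hv_def on_disc_def)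
  show "Hv_norm k (on_disc f) \<le> B"
    unfolding Hv_norm_def using assms(2) by (intro cSUP_least) (auto simp: on_disc_def)
qed

lemma Hv_norm_ge: "f \<in> Hv k \<Longrightarrow> z \<in> ball 0 1 \<Longrightarrow> vw z ^ k * norm (f z) \<le> Hv_norm k f"
  unfolding Hv_def Hv_norm_def by (auto intro: cSUP_upper)

lemma Hv_norm_nonneg:
  assumes "f \<in> Hv k"
  shows "0 \<le> Hv_norm k f"
proof -
  have "0 \<le> vw 0 ^ k * norm (f 0)" using vw_pos[of 0] by simp
  also have "\<dots> \<le> Hv_norm k f" using assms by (rule Hv_norm_ge) simp
  finally show ?thesis .
qed

lemma Hv_subset_VH: "Hv k \<subseteq> VH"
  unfolding VH_def by blast

lemma VH_lincomb:
  assumes "x \<in> VH" "y \<in> VH"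
  shows "(\<lambda>z. a * x z + b * y z) \<in> VH"
proof -
  obtain k1 k2 where x: "x \<in> Hv k1" and y: "y \<in> Hv k2" using assms unfolding VH_def by blast
  have "(\<lambda>z. a * x z + b * y z) holomorphic_on ball 0 1"
    using x y unfolding Hv_def by (auto intro!: holomorphic_intros)
  moreover have "vw z ^ (k1 + k2) * norm (a * x z + b * y z)
          \<le> norm a * Hv_norm k1 x + norm b * Hv_norm k2 y" if z: "z \<in> ball 0 1" for z
  proof -
    have "vw z ^ (k1 + k2) \<le> vw z ^ k1" "vw z ^ (k1 + k2) \<le> vw z ^ k2"
      using vw_pos[OF z] vw_le_one[OF z] by (auto intro: power_decreasing)
    have "vw z ^ (k1 + k2) * norm (a * x z + b * y z)
          \<le> vw z ^ (k1 + k2) * (norm a * norm (x z) + norm b * norm (y z))"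
      using vw_pos[OF z] by (intro mult_left_mono) (auto simp: norm_mult intro: norm_triangle_le)
    also have "\<dots> \<le> norm a * (vw z ^ k1 * norm (x z)) + norm b * (vw z ^ k2 * norm (y z))"
      using \<open>vw z ^ (k1 + k2) \<le> vw z ^ k1\<close> \<open>vw z ^ (k1 + k2) \<le> vw z ^ k2\<close>
      by (simp add: algebra_simps add_mono mult_left_mono mult_right_mono)
    also have "\<dots> \<le> norm a * Hv_norm k1 x + norm b * Hv_norm k2 y"
      using Hv_norm_ge[OF x z] Hv_norm_ge[OF y z] by (intro add_mono mult_left_mono) auto
    finally show ?thesis .
  qed
  ultimately have "on_disc (\<lambda>z. a * x z + b * y z) \<in> Hv (k1 + k2)" by (rule on_disc_in_Hv)
  moreover have "on_disc (\<lambda>z. a * x z + b * y z) = (\<lambda>z. a * x z + b * y z)"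
    using x y by (auto simp: on_disc_def Hv_def)
  ultimately show ?thesis using Hv_subset_VH by auto
qed

lemma topspace_VH_top: "topspace VH_top = VH"
proof
  show "topspace VH_top \<subseteq> VH" unfolding topspace_def openin_VH_top VH_open_def by blast
  have "VH_basic_nbhd VH"
    unfolding VH_basic_nbhd_def using Hv_subset_VH VH_lincomb by (blast intro: zero_less_one)
  hence "openin VH_top VH"
    unfolding openin_VH_top VH_open_def using VH_lincomb[of _ _ 1 1] by auto
  thus "VH \<subseteq> topspace VH_top" by (rule openin_subset)
qed

lemma cesaro_on_disc:
  assumes primitive: "\<And>w. w \<in> ball 0 1 \<Longrightarrow> ((\<lambda>w. w * F w) has_field_derivative g w / (1 - w)) (at w)"
    and "g 0 = F 0"
  shows "cesaro (on_disc g) = on_disc F"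
proof
  fix z
  show "cesaro (on_disc g) z = on_disc F z"
  proof (cases "z \<in> ball 0 1 \<and> z \<noteq> 0")
    case False
    thus ?thesis using assms(2) by (auto simp: cesaro_def on_disc_def)
  next
    case True
    have "((\<lambda>w. on_disc g w / (1 - w)) has_contour_integral
            (\<lambda>w. w * F w) (pathfinish (linepath 0 z)) - (\<lambda>w. w * F w) (pathstart (linepath 0 z)))
          (linepath 0 z)"
    proof (rule contour_integral_primitive[where S = "ball 0 1"])
      show "((\<lambda>w. w * F w) has_field_derivative on_disc g w / (1 - w)) (at w within ball 0 1)"
        if "w \<in> ball 0 1" for w
        using primitive[OF that] that by (simp add: on_disc_def has_field_derivative_at_within)
      show "path_image (linepath 0 z) \<subseteq> ball 0 1"
        using True by (simp add: closed_segment_subset)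
      show "valid_path (linepath 0 z)" by (rule valid_path_linepath)
    qed
    thus ?thesis using True by (simp add: cesaro_def on_disc_def contour_integral_unique)
  qed
qed

text \<open>The test functions are chosen such that their Cesaro images are the powers
  \<open>c * neglog z ^ Suc N\<close>: they are \<open>1 - z\<close> times the derivative of \<open>c * z * neglog z ^ Suc N\<close>.\<close>
definition cesaro_test :: "complex \<Rightarrow> nat \<Rightarrow> complex \<Rightarrow> complex" where
  "cesaro_test c N = on_disc (\<lambda>z. c * ((1 - z) * neglog z ^ Suc N + of_nat (Suc N) * z * neglog z ^ N))"

lemma cesaro_cesaro_test: "cesaro (cesaro_test c N) = on_disc (\<lambda>z. c * neglog z ^ Suc N)"
  unfolding cesaro_test_def
proof (rule cesaro_on_disc)
  fix w :: complex
  assume w: "w \<in> ball 0 1"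
  have "((\<lambda>w. neglog w ^ Suc N) has_field_derivative
      of_nat (Suc N) * neglog w ^ N * inverse (1 - w)) (at w)"
    using DERIV_power[OF has_field_derivative_neglog[OF w], of "Suc N"] by (simp add: mult_ac)
  hence "((\<lambda>w. w * (c * neglog w ^ Suc N)) has_field_derivative
      1 * (c * neglog w ^ Suc N) + c * (of_nat (Suc N) * neglog w ^ N * inverse (1 - w)) * w) (at w)"
    by (intro DERIV_mult DERIV_ident DERIV_cmult)
  moreover have "1 - w \<noteq> 0" using w by auto
  ultimately show "((\<lambda>w. w * (c * neglog w ^ Suc N)) has_field_derivative
      c * ((1 - w) * neglog w ^ Suc N + of_nat (Suc N) * w * neglog w ^ N) / (1 - w)) (at w)"
    by (simp add: field_simps)
qed simp

lemma norm_cesaro_cesaro_test_neglog_inv: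
  assumes "0 \<le> c" "0 < t"
  shows "norm (cesaro (cesaro_test (of_real c) N) (neglog_inv t)) = c * t ^ Suc N"
proof -
  have "neglog_inv t \<in> ball 0 1" using assms(2) by (rule neglog_inv_in_ball)
  thus ?thesis using assms by (simp add: cesaro_cesaro_test on_disc_def norm_mult norm_power)
qed

lemma vw_power_mult_norm_cesaro_test_le:
  assumes z: "z \<in> ball 0 1"
  shows "vw z ^ N * norm ((1 - z) * neglog z ^ Suc N + of_nat (Suc N) * z * neglog z ^ N)
           \<le> (real N + 11) * 6 ^ N"
proof -
  define a l where "a = vw z" and "l = norm (neglog z)"
  have a0: "0 \<le> a" using vw_pos[OF z] by (simp add: a_def)
  have al: "(a * l) ^ N \<le> 6 ^ N"
    using vw_mult_norm_neglog_le[OF z] a0 by (intro power_mono) (auto simp: a_def l_def)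
  have zl: "norm (1 - z) * l \<le> 10"
    using norm_one_minus_mult_norm_neglog_le[OF z] by (simp add: l_def)
  have "norm ((1 - z) * neglog z ^ Suc N + of_nat (Suc N) * z * neglog z ^ N)
          \<le> norm (1 - z) * l ^ Suc N + real (Suc N) * norm z * l ^ N"
    using norm_triangle_ineq[of "(1 - z) * neglog z ^ Suc N" "of_nat (Suc N) * z * neglog z ^ N"]
    by (simp add: l_def norm_mult norm_power del: power_Suc of_nat_Suc)
  hence "a ^ N * norm ((1 - z) * neglog z ^ Suc N + of_nat (Suc N) * z * neglog z ^ N)
          \<le> a ^ N * (norm (1 - z) * l ^ Suc N + real (Suc N) * norm z * l ^ N)"
    using a0 by (simp add: mult_left_mono del: power_Suc of_nat_Suc)
  also have "\<dots> = (norm (1 - z) * l) * (a * l) ^ N + real (Suc N) * norm z * (a * l) ^ N"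
    by (simp add: power_mult_distrib algebra_simps del: of_nat_Suc)
  also have "\<dots> \<le> 10 * 6 ^ N + real (Suc N) * 1 * 6 ^ N"
    using al zl z a0 by (intro add_mono mult_mono) (auto simp: l_def)
  also have "\<dots> = (real N + 11) * 6 ^ N" by (simp add: algebra_simps)
  finally show ?thesis by (simp only: a_def)
qed

lemma
  shows cesaro_test_in_Hv: "cesaro_test c N \<in> Hv N"
    and Hv_norm_cesaro_test_le: "Hv_norm N (cesaro_test c N) \<le> norm c * ((real N + 11) * 6 ^ N)"
proof -
  have "(\<lambda>z. c * ((1 - z) * neglog z ^ Suc N + of_nat (Suc N) * z * neglog z ^ N))
      holomorphic_on ball 0 1"
    by (intro holomorphic_intros holomorphic_on_neglog)
  moreover have "vw z ^ N * norm (c * ((1 - z) * neglog z ^ Suc N + of_nat (Suc N) * z * neglog z ^ N))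
          \<le> norm c * ((real N + 11) * 6 ^ N)" if z: "z \<in> ball 0 1" for z
    using mult_left_mono[OF vw_power_mult_norm_cesaro_test_le[OF z] norm_ge_zero[of c]]
    by (simp only: norm_mult mult.left_commute)
  ultimately show "cesaro_test c N \<in> Hv N" "Hv_norm N (cesaro_test c N) \<le> norm c * ((real N + 11) * 6 ^ N)"
    unfolding cesaro_test_def by (blast intro: on_disc_in_Hv Hv_norm_on_disc_le)+
qed

lemma on_disc_neglog_power_in_Hv: "on_disc (\<lambda>z. c * neglog z ^ n) \<in> Hv n"
proof (rule on_disc_in_Hv)
  show "(\<lambda>z. c * neglog z ^ n) holomorphic_on ball 0 1"
    by (intro holomorphic_intros holomorphic_on_neglog)
  show "vw z ^ n * norm (c * neglog z ^ n) \<le> norm c * 6 ^ n" if z: "z \<in> ball 0 1" for z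
  proof -
    have "(vw z * norm (neglog z)) ^ n \<le> 6 ^ n"
      using vw_mult_norm_neglog_le[OF z] vw_pos[OF z] by (intro power_mono) auto
    thus ?thesis by (simp add: norm_mult norm_power power_mult_distrib mult_left_mono algebra_simps)
  qed
qed

lemma Hv_norm_cesaro_test_less:
  assumes "0 < \<epsilon>"
  shows "\<exists>c>0. Hv_norm N (cesaro_test (of_real c) N) < \<epsilon>"
proof -
  define c where "c = \<epsilon> / (2 * ((real N + 11) * 6 ^ N))"
  have "0 < c" using assms by (simp add: c_def)
  moreover have "c * ((real N + 11) * 6 ^ N) = \<epsilon> / 2" by (simp add: c_def)
  ultimately show ?thesis
    using Hv_norm_cesaro_test_le[where c = "of_real c" and N = N] assms by (intro exI[of _ c]) auto
qed

lemma cesaro_cesaro_test_in_VH: "cesaro (cesaro_test c N) \<in> VH"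
  using on_disc_neglog_power_in_Hv Hv_subset_VH unfolding cesaro_cesaro_test by blast

text \<open>The supremum over \<open>i\<close> of such a family is a continuous seminorm on the inductive limit,
  with open balls \<open>qball r\<close>.\<close>
locale VH_seminorm_family =
  fixes q :: "'i \<Rightarrow> (complex \<Rightarrow> complex) \<Rightarrow> real"
  assumes nonneg: "0 \<le> q i g"
    and lincomb_le: "x \<in> VH \<Longrightarrow> y \<in> VH \<Longrightarrow>
                       q i (\<lambda>z. a * x z + b * y z) \<le> norm a * q i x + norm b * q i y"
    and dominated: "\<exists>M>0. \<forall>i. \<forall>g\<in>Hv k. q i g \<le> M * Hv_norm k g"
begin

definition qball :: "real \<Rightarrow> (complex \<Rightarrow> complex) set" where
  "qball r = {g \<in> VH. \<exists>B<r. \<forall>i. q i g \<le> B}"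

lemma qball_mono: "r \<le> s \<Longrightarrow> qball r \<subseteq> qball s"
  unfolding qball_def using order_less_le_trans by blast

lemma add_le: "x \<in> VH \<Longrightarrow> y \<in> VH \<Longrightarrow> q i (\<lambda>z. x z + y z) \<le> q i x + q i y"
  using lincomb_le[of x y i 1 1] by simp

lemma VH_basic_nbhd_qball:
  assumes "0 < r"
  shows "VH_basic_nbhd (qball r)"
  unfolding VH_basic_nbhd_def
proof (intro conjI ballI allI impI)
  show "qball r \<subseteq> VH" by (auto simp: qball_def)
next
  fix x y and a b :: complex
  assume "x \<in> qball r" "y \<in> qball r" and ab: "norm a + norm b \<le> 1"
  then obtain Bx By where x: "x \<in> VH" "Bx < r" "\<And>i. q i x \<le> Bx"
    and y: "y \<in> VH" "By < r" "\<And>i. q i y \<le> By"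
    by (auto simp: qball_def)
  have "q i (\<lambda>z. a * x z + b * y z) \<le> max Bx By" for i
  proof -
    have "q i (\<lambda>z. a * x z + b * y z) \<le> norm a * q i x + norm b * q i y"
      by (rule lincomb_le[OF x(1) y(1)])
    also have "\<dots> \<le> norm a * max Bx By + norm b * max Bx By"
      using x(3)[of i] y(3)[of i] by (intro add_mono mult_left_mono) auto
    also have "\<dots> = (norm a + norm b) * max Bx By"
      by (simp add: distrib_right)
    also have "\<dots> \<le> max Bx By"
      using ab nonneg[of i x] x(3)[of i] by (simp add: mult_left_le_one_le)
    finally show ?thesis .
  qed
  thus "(\<lambda>z. a * x z + b * y z) \<in> qball r"
    using x y VH_lincomb[OF x(1) y(1)] unfolding qball_def by (auto intro!: exI[of _ "max Bx By"])
next
  fix k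
  obtain M where M: "0 < M" "\<And>i g. g \<in> Hv k \<Longrightarrow> q i g \<le> M * Hv_norm k g"
    using dominated[of k] by blast
  have "{g \<in> Hv k. Hv_norm k g < r / M} \<subseteq> qball r"
  proof safe
    fix g assume g: "g \<in> Hv k" "Hv_norm k g < r / M"
    hence "M * Hv_norm k g < r" using M(1) by (simp add: pos_less_divide_eq mult.commute)
    thus "g \<in> qball r" using M(2)[OF g(1)] g(1) Hv_subset_VH unfolding qball_def by blast
  qed
  thus "\<exists>\<epsilon>>0. {g \<in> Hv k. Hv_norm k g < \<epsilon>} \<subseteq> qball r"
    using assms M(1) by (intro exI[of _ "r / M"]) auto
qed

lemma openin_qball: "openin VH_top (qball r)"
  unfolding openin_VH_top VH_open_def
proof (intro conjI ballI)
  show "qball r \<subseteq> VH" by (auto simp: qball_def)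
next
  fix f assume "f \<in> qball r"
  then obtain Bf where f: "f \<in> VH" "Bf < r" "\<And>i. q i f \<le> Bf" by (auto simp: qball_def)
  have "(\<lambda>g z. f z + g z) ` qball (r - Bf) \<subseteq> qball r"
  proof safe
    fix g assume "g \<in> qball (r - Bf)"
    then obtain B where g: "g \<in> VH" "B < r - Bf" "\<And>i. q i g \<le> B" by (auto simp: qball_def)
    have "q i (\<lambda>z. f z + g z) \<le> Bf + B" for i
      using add_le[OF f(1) g(1), of i] f(3)[of i] g(3)[of i] by linarith
    thus "(\<lambda>z. f z + g z) \<in> qball r"
      using g(2) VH_lincomb[OF f(1) g(1), of 1 1] unfolding qball_def
      by (auto intro!: exI[of _ "Bf + B"])
  qed
  thus "\<exists>W. VH_basic_nbhd W \<and> (\<lambda>g z. f z + g z) ` W \<subseteq> qball r"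
    using VH_basic_nbhd_qball[of "r - Bf"] f(2) by auto
qed

lemma VH_subset_UN_qball: "VH \<subseteq> (\<Union>n::nat. qball (real n))"
proof
  fix g assume "g \<in> VH"
  then obtain k where g: "g \<in> Hv k" unfolding VH_def by blast
  obtain M where M: "\<And>i. q i g \<le> M * Hv_norm k g" using dominated[of k] g by blast
  obtain n :: nat where "M * Hv_norm k g < n" using reals_Archimedean2 by blast
  hence "g \<in> qball (real n)" using M g Hv_subset_VH unfolding qball_def by blast
  thus "g \<in> (\<Union>n. qball (real n))" by blast
qed

lemma compactin_bounded:
  assumes "compactin VH_top K"
  obtains B where "\<And>g i. g \<in> K \<Longrightarrow> q i g \<le> B"
proof -
  have "K \<subseteq> (\<Union>n::nat. qball (real n))"
    using compactin_subset_topspace[OF assms] VH_subset_UN_qball topspace_VH_top by blast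
  then obtain \<F> where \<F>: "finite \<F>" "\<F> \<subseteq> range (\<lambda>n::nat. qball (real n))" "K \<subseteq> \<Union>\<F>"
    using compactinD[OF assms, of "range (\<lambda>n::nat. qball (real n))"] openin_qball by blast
  then obtain A where A: "finite A" "\<F> = (\<lambda>n::nat. qball (real n)) ` A"
    using finite_subset_image[OF \<F>(1,2)] by blast
  define N where "N = Max (insert 0 A)"
  have "qball (real n) \<subseteq> qball (real N)" if "n \<in> A" for n
    using that A(1) by (intro qball_mono) (simp add: N_def)
  hence K: "K \<subseteq> qball (real N)" using \<F>(3) A(2) by blast
  show ?thesis
  proof (rule that)
    fix g i assume "g \<in> K"
    then obtain B where "B < real N" "\<forall>i. q i g \<le> B" using K unfolding qball_def by blast
    thus "q i g \<le> real N" by (meson less_imp_le order_trans)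
  qed
qed

end

lemma norm_neglog_inv_le:
  assumes "g \<in> Hv k" "1 \<le> t"
  shows "norm (g (neglog_inv t)) \<le> t ^ k * Hv_norm k g"
proof -
  have "neglog_inv t \<in> ball 0 1" using assms(2) by (intro neglog_inv_in_ball) auto
  from Hv_norm_ge[OF assms(1) this]
  have "norm (g (neglog_inv t)) / t ^ k \<le> Hv_norm k g"
    using vw_neglog_inv[OF assms(2)] by (simp add: power_inverse divide_inverse mult.commute)
  thus ?thesis using assms(2) by (simp add: pos_divide_le_eq mult.commute)
qed

lemma VH_seminorm_family_neglog_inv:
  fixes T :: "nat \<Rightarrow> real"
  assumes T: "\<And>m. 1 \<le> T m"
  shows "VH_seminorm_family (\<lambda>m g. norm (g (neglog_inv (T m))) / T m ^ m)"
proof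
  fix m and g :: "complex \<Rightarrow> complex"
  show "0 \<le> norm (g (neglog_inv (T m))) / T m ^ m" using T[of m] by simp
next
  fix m x y and a b :: complex
  have "norm (a * x (neglog_inv (T m)) + b * y (neglog_inv (T m))) / T m ^ m
      \<le> (norm a * norm (x (neglog_inv (T m))) + norm b * norm (y (neglog_inv (T m)))) / T m ^ m"
    using T[of m] by (intro divide_right_mono) (auto simp: norm_mult intro: norm_triangle_le)
  thus "norm (a * x (neglog_inv (T m)) + b * y (neglog_inv (T m))) / T m ^ m
      \<le> norm a * (norm (x (neglog_inv (T m))) / T m ^ m)
        + norm b * (norm (y (neglog_inv (T m))) / T m ^ m)"
    by (simp add: add_divide_distrib)
next
  fix k
  define M where "M = 1 + (\<Sum>j<k. T j ^ k)"
  have T0: "0 \<le> T j" for j using T[of j] by linarith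
  have ratio: "T m ^ k / T m ^ m \<le> M" for m
  proof (cases "k \<le> m")
    case True
    hence "T m ^ k / T m ^ m \<le> 1" using T[of m] by (simp add: power_increasing)
    also have "1 \<le> M" unfolding M_def using T0 by (simp add: sum_nonneg)
    finally show ?thesis .
  next
    case False
    have "T m ^ k / T m ^ m \<le> T m ^ k" using T[of m] by (simp add: divide_le_eq one_le_power)
    also have "\<dots> \<le> (\<Sum>j<k. T j ^ k)"
      using False T0 by (intro member_le_sum[where f = "\<lambda>j. T j ^ k"]) auto
    finally show ?thesis unfolding M_def by simp
  qed
  have "norm (g (neglog_inv (T m))) / T m ^ m \<le> M * Hv_norm k g" if g: "g \<in> Hv k" for m g
  proof -
    have "norm (g (neglog_inv (T m))) / T m ^ m \<le> T m ^ k * Hv_norm k g / T m ^ m"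
      using norm_neglog_inv_le[OF g T] T[of m] by (simp add: divide_right_mono)
    also have "\<dots> = (T m ^ k / T m ^ m) * Hv_norm k g" by simp
    also have "\<dots> \<le> M * Hv_norm k g" using ratio Hv_norm_nonneg[OF g] by (rule mult_right_mono)
    finally show ?thesis .
  qed
  moreover have "0 < M" unfolding M_def using T0 by (simp add: add_pos_nonneg sum_nonneg)
  ultimately show "\<exists>M>0. \<forall>m. \<forall>g\<in>Hv k. norm (g (neglog_inv (T m))) / T m ^ m \<le> M * Hv_norm k g"
    by blast
qed

lemma VH_zero_nbhd_contains_balls:
  assumes "VH_zero_nbhd U"
  obtains e where "\<And>k. 0 < e k" "\<And>k. {g \<in> Hv k. Hv_norm k g < e k} \<subseteq> U"
proof -
  obtain S where S: "openin VH_top S" "(\<lambda>z. 0) \<in> S" "S \<subseteq> U"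
    using assms unfolding VH_zero_nbhd_def by blast
  then obtain W where W: "VH_basic_nbhd W" "(\<lambda>g z. 0 + g z) ` W \<subseteq> S"
    unfolding openin_VH_top VH_open_def by fastforce
  hence "W \<subseteq> U" using S(3) by auto
  moreover obtain e where "\<And>k. 0 < e k" "\<And>k. {g \<in> Hv k. Hv_norm k g < e k} \<subseteq> W"
    using W(1) unfolding VH_basic_nbhd_def by metis
  ultimately show ?thesis using that by blast
qed

theorem corollary2p5:
  shows "\<not> (\<exists>U. U \<subseteq> VH \<and> VH_zero_nbhd U \<and>
              compactin VH_top (VH_top closure_of (cesaro ` U)))"
proof
  assume "\<exists>U. U \<subseteq> VH \<and> VH_zero_nbhd U \<and> compactin VH_top (VH_top closure_of (cesaro ` U))"
  then obtain U where U: "VH_zero_nbhd U" and compact: "compactin VH_top (VH_top closure_of (cesaro ` U))"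
    by blast
  obtain e where e: "\<And>k. 0 < e k" "\<And>k. {g \<in> Hv k. Hv_norm k g < e k} \<subseteq> U"
    using VH_zero_nbhd_contains_balls[OF U] by blast
  have "\<exists>c>0. cesaro_test (of_real c) N \<in> U" for N
    using Hv_norm_cesaro_test_less[OF e(1)] e(2)[of N] cesaro_test_in_Hv by blast
  then obtain c where c: "\<And>N. 0 < c N" "\<And>N. cesaro_test (of_real (c N)) N \<in> U" by metis
  define T where "T N = max 1 (real N / c N)" for N
  interpret VH_seminorm_family "\<lambda>m g. norm (g (neglog_inv (T m))) / T m ^ m"
    by (rule VH_seminorm_family_neglog_inv) (simp add: T_def)
  obtain B where B: "\<And>g m. g \<in> VH_top closure_of (cesaro ` U) \<Longrightarrow> norm (g (neglog_inv (T m))) / T m ^ m \<le> B"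
    using compactin_bounded[OF compact] by blast
  obtain N :: nat where "B < N" using reals_Archimedean2 by blast
  have "cesaro (cesaro_test (of_real (c N)) N) \<in> VH_top closure_of (cesaro ` U)"
    using c(2) cesaro_cesaro_test_in_VH closure_of_subset_Int[of VH_top "cesaro ` U"] topspace_VH_top
    by blast
  hence "norm (cesaro (cesaro_test (of_real (c N)) N) (neglog_inv (T N))) / T N ^ N \<le> B"
    by (rule B)
  moreover have "1 \<le> T N" by (simp add: T_def)
  ultimately have "c N * T N \<le> B"
    using c(1)[of N] by (simp add: norm_cesaro_cesaro_test_neglog_inv)
  moreover have "real N \<le> c N * T N"
    using mult_left_mono[OF max.cobounded2[of "real N / c N" 1], of "c N"] c(1)[of N] by (simp add: T_def)
  ultimately show False using \<open>B < N\<close> by linarith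
qed

end
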